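(* In the setting below, let $I\subseteq\{0,\dots,n\}$ and $J\subseteq\{0,\dots,m\}$ be intervals of equal length such that every point of $I\times J$ is $2\Delta$-relevant, where $\Delta\ge1$. Then the sumset $\{(i,f(i)) : i\in I\}+\{(j,g(j)) : j\in J\}\subseteq\mathbb{Z}^2$ has size $O(\Delta\cdot(|I|+|J|))$.
   Context: Setting: $f\colon\{0,\dots,n\}\to\mathbb{Z}$, $g\colon\{0,\dots,m\}\to\mathbb{Z}$, and convex functions $\breve f\colon\{0,\dots,n\}\to\mathbb{Q}$, $\breve g\colon\{0,\dots,m\}\to\mathbb{Q}$ (convex: $F(i)-F(i-1)\le F(i+1)-F(i)$ for interior $i$) with $\breve f\le f\le\breve f+\Delta$ and $\breve g\le g\le\breve g+\Delta$ pointwise. Let $\breve h(k)=\min_{i+j=k}\breve f(i)+\breve g(j)$. A point $(i,j)$ is $\delta$-relevant if $\breve f(i)+\breve g(j)\le\breve h(i+j)+\delta$. The sumset of $A,B\subseteq\mathbb{Z}^2$ is $A+B=\{a+b : a\in A,b\in B\}$ with componentwise addition. *)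

theory Defs
  imports Complex_Main
begin

definition dconvex :: "nat \<Rightarrow> (nat \<Rightarrow> rat) \<Rightarrow> bool" where
  "dconvex n F \<longleftrightarrow> (\<forall>i. 0 < i \<and> i < n \<longrightarrow> F i - F (i - 1) \<le> F (i + 1) - F i)"

definition hconv :: "nat \<Rightarrow> nat \<Rightarrow> (nat \<Rightarrow> rat) \<Rightarrow> (nat \<Rightarrow> rat) \<Rightarrow> nat \<Rightarrow> rat" where
  "hconv n m F G k = Min {F i + G j | i j. i \<le> n \<and> j \<le> m \<and> i + j = k}"

definition relevant :: "nat \<Rightarrow> nat \<Rightarrow> (nat \<Rightarrow> rat) \<Rightarrow> (nat \<Rightarrow> rat) \<Rightarrow> rat \<Rightarrow> nat \<Rightarrow> nat \<Rightarrow> bool" where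
  "relevant n m F G \<delta> i j \<longleftrightarrow> F i + G j \<le> hconv n m F G (i + j) + \<delta>"

definition sumset :: "(int \<times> int) set \<Rightarrow> (int \<times> int) set \<Rightarrow> (int \<times> int) set" where
  "sumset A B = {(fst a + fst b, snd a + snd b) | a b. a \<in> A \<and> b \<in> B}"

end

theory Submission
  imports Defs
begin

text \<open>For i \<in> I and j \<in> J, relevance puts fb i + gb j
  within 2\<Delta> above the lower envelope h(i + j), and the sandwich adds at most \<Delta> per summand,
  so f i + g j lies in [h(i + j), h(i + j) + 4\<Delta>]. Hence the sumset lies in a band of height
  4\<Delta> over the at most |I| + |J| columns i + j, and each column of the band contains at most
  4\<Delta> + 1 \<le> 5\<Delta> integer points.\<close>

definition band :: "(nat \<Rightarrow> rat) \<Rightarrow> rat \<Rightarrow> nat set \<Rightarrow> (int \<times> int) set" where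
  "band H w K = {(int k, y) | k y. k \<in> K \<and> H k \<le> of_int y \<and> of_int y \<le> H k + w}"

lemma hconv_le:
  assumes "i \<le> n" "j \<le> m"
  shows "hconv n m F G (i + j) \<le> F i + G j"
proof -
  have "{F i + G j | i j. i \<le> n \<and> j \<le> m \<and> i + j = k} \<subseteq> (\<lambda>(i, j). F i + G j) ` ({..n} \<times> {..m})"
    for k by auto
  then have "finite {F i + G j | i j. i \<le> n \<and> j \<le> m \<and> i + j = k}" for k
    by (rule finite_subset) auto
  then show ?thesis
    unfolding hconv_def by (rule Min_le) (use assms in blast)
qed

lemma band_subset_image:
  assumes "0 \<le> w"
  shows "band H w K \<subseteq> (\<lambda>(k, t). (int k, \<lceil>H k\<rceil> + t)) ` (K \<times> {0..\<lfloor>w\<rfloor>})"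
proof
  fix p assume "p \<in> band H w K"
  then obtain k y where p: "p = (int k, y)" and "k \<in> K"
    and lo: "H k \<le> of_int y" and hi: "of_int y \<le> H k + w"
    unfolding band_def by blast
  define t where "t = y - \<lceil>H k\<rceil>"
  have "0 \<le> t" using lo by (simp add: t_def ceiling_le_iff)
  moreover have "of_int t \<le> w"
    using hi le_of_int_ceiling[of "H k"] unfolding t_def of_int_diff by linarith
  then have "t \<le> \<lfloor>w\<rfloor>" by (simp add: le_floor_iff)
  ultimately show "p \<in> (\<lambda>(k, t). (int k, \<lceil>H k\<rceil> + t)) ` (K \<times> {0..\<lfloor>w\<rfloor>})"
    using \<open>k \<in> K\<close> by (intro image_eqI[where x = "(k, t)"]) (auto simp: p t_def)
qed

lemma finite_band:
  assumes "finite K" "0 \<le> w"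
  shows "finite (band H w K)"
  by (rule finite_subset[OF band_subset_image[OF assms(2)]]) (simp add: assms(1))

lemma card_band_le:
  assumes "finite K" "0 \<le> w"
  shows "card (band H w K) \<le> card K * nat (\<lfloor>w\<rfloor> + 1)"
proof -
  have "card (band H w K) \<le> card ((\<lambda>(k, t). (int k, \<lceil>H k\<rceil> + t)) ` (K \<times> {0..\<lfloor>w\<rfloor>}))"
    by (rule card_mono[OF _ band_subset_image[OF assms(2)]]) (simp add: assms(1))
  also have "\<dots> \<le> card (K \<times> {0..\<lfloor>w\<rfloor>})"
    by (rule card_image_le) (simp add: assms(1))
  also have "\<dots> = card K * nat (\<lfloor>w\<rfloor> + 1)"
    by (simp add: card_cartesian_product)
  finally show ?thesis .
qed

lemma sumset_graphs_subset_band: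
  fixes f g :: "nat \<Rightarrow> int" and fb gb :: "nat \<Rightarrow> rat"
  assumes "I \<subseteq> {..n}" "J \<subseteq> {..m}"
    and f_sandwich: "\<forall>i\<le>n. fb i \<le> of_int (f i) \<and> of_int (f i) \<le> fb i + \<Delta>"
    and g_sandwich: "\<forall>j\<le>m. gb j \<le> of_int (g j) \<and> of_int (g j) \<le> gb j + \<Delta>"
    and rel: "\<forall>i\<in>I. \<forall>j\<in>J. relevant n m fb gb \<delta> i j"
  shows "sumset {(int i, f i) | i. i \<in> I} {(int j, g j) | j. j \<in> J}
           \<subseteq> band (hconv n m fb gb) (\<delta> + 2 * \<Delta>) {i + j | i j. i \<in> I \<and> j \<in> J}"
proof
  fix p assume "p \<in> sumset {(int i, f i) | i. i \<in> I} {(int j, g j) | j. j \<in> J}"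
  then obtain i j where "i \<in> I" "j \<in> J" and p: "p = (int (i + j), f i + g j)"
    unfolding sumset_def by auto
  with assms(1,2) have "i \<le> n" "j \<le> m" by auto
  have "hconv n m fb gb (i + j) \<le> fb i + gb j"
    using \<open>i \<le> n\<close> \<open>j \<le> m\<close> by (rule hconv_le)
  moreover have "fb i + gb j \<le> hconv n m fb gb (i + j) + \<delta>"
    using rel \<open>i \<in> I\<close> \<open>j \<in> J\<close> unfolding relevant_def by auto
  moreover have "fb i + gb j \<le> of_int (f i + g j)" "of_int (f i + g j) \<le> fb i + gb j + 2 * \<Delta>"
    using f_sandwich g_sandwich \<open>i \<le> n\<close> \<open>j \<le> m\<close> by force+
  ultimately show "p \<in> band (hconv n m fb gb) (\<delta> + 2 * \<Delta>) {i + j | i j. i \<in> I \<and> j \<in> J}"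
    unfolding band_def p using \<open>i \<in> I\<close> \<open>j \<in> J\<close> by fastforce
qed

lemma sums_of_intervals_subset:
  fixes a b L :: nat
  shows "{i + j | i j. i \<in> {a..<a + L} \<and> j \<in> {b..<b + L}} \<subseteq> {a + b..<a + b + 2 * L}"
  by auto

lemma nat_floor_succ_le:
  fixes w :: rat
  assumes "0 \<le> w"
  shows "real (nat (\<lfloor>w\<rfloor> + 1)) \<le> real_of_rat w + 1"
proof -
  have "real (nat (\<lfloor>w\<rfloor> + 1)) = real_of_rat (of_int \<lfloor>w\<rfloor>) + 1"
    using assms by simp
  also have "\<dots> \<le> real_of_rat w + 1"
    by (simp only: add_le_cancel_right of_rat_less_eq of_int_floor_le)
  finally show ?thesis .
qed

lemma card_sumset_graphs_le:
  fixes f g :: "nat \<Rightarrow> int" and fb gb :: "nat \<Rightarrow> rat" and \<Delta> :: rat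
  assumes f_sandwich: "\<forall>i\<le>n. fb i \<le> of_int (f i) \<and> of_int (f i) \<le> fb i + \<Delta>"
    and g_sandwich: "\<forall>j\<le>m. gb j \<le> of_int (g j) \<and> of_int (g j) \<le> gb j + \<Delta>"
    and "\<Delta> \<ge> 1"
    and "{a..<a + L} \<subseteq> {0..n}" "{b..<b + L} \<subseteq> {0..m}"
    and rel: "\<forall>i\<in>{a..<a + L}. \<forall>j\<in>{b..<b + L}. relevant n m fb gb (2 * \<Delta>) i j"
  shows "real (card (sumset {(int i, f i) | i. i \<in> {a..<a + L}} {(int j, g j) | j. j \<in> {b..<b + L}}))
           \<le> 5 * real_of_rat \<Delta> * real (card {a..<a + L} + card {b..<b + L})"
proof -
  let ?K = "{i + j | i j. i \<in> {a..<a + L} \<and> j \<in> {b..<b + L}}"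
  have "finite ?K"
    by (rule finite_subset[OF sums_of_intervals_subset]) simp
  have "sumset {(int i, f i) | i. i \<in> {a..<a + L}} {(int j, g j) | j. j \<in> {b..<b + L}}
          \<subseteq> band (hconv n m fb gb) (4 * \<Delta>) ?K"
    using sumset_graphs_subset_band[OF _ _ f_sandwich g_sandwich rel] assms(4,5)
    by (simp add: atLeast0AtMost)
  then have "card (sumset {(int i, f i) | i. i \<in> {a..<a + L}} {(int j, g j) | j. j \<in> {b..<b + L}})
               \<le> card (band (hconv n m fb gb) (4 * \<Delta>) ?K)"
    by (rule card_mono[rotated]) (rule finite_band, use \<open>finite ?K\<close> \<open>\<Delta> \<ge> 1\<close> in auto)
  also have "\<dots> \<le> card ?K * nat (\<lfloor>4 * \<Delta>\<rfloor> + 1)"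
    by (rule card_band_le) (use \<open>finite ?K\<close> \<open>\<Delta> \<ge> 1\<close> in auto)
  also have "\<dots> \<le> 2 * L * nat (\<lfloor>4 * \<Delta>\<rfloor> + 1)"
    using card_mono[OF _ sums_of_intervals_subset, of a b L] by simp
  finally have "real (card (sumset {(int i, f i) | i. i \<in> {a..<a + L}} {(int j, g j) | j. j \<in> {b..<b + L}}))
                  \<le> real (2 * L) * real (nat (\<lfloor>4 * \<Delta>\<rfloor> + 1))"
    by (simp only: of_nat_mult[symmetric] of_nat_le_iff)
  also have "\<dots> \<le> real (2 * L) * (real_of_rat (4 * \<Delta>) + 1)"
    by (rule mult_left_mono[OF nat_floor_succ_le]) (use \<open>\<Delta> \<ge> 1\<close> in auto)
  also have "\<dots> \<le> real (2 * L) * (5 * real_of_rat \<Delta>)"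
    using \<open>\<Delta> \<ge> 1\<close> by (intro mult_left_mono) (simp_all add: of_rat_mult of_rat_less_eq)
  finally show ?thesis by (simp add: mult_ac)
qed

theorem mainTheorem15:
  shows "\<exists>C::real. C > 0 \<and>
    (\<forall>(n::nat) (m::nat) (f::nat \<Rightarrow> int) (g::nat \<Rightarrow> int) (fb::nat \<Rightarrow> rat) (gb::nat \<Rightarrow> rat)
       (\<Delta>::rat) (a::nat) (b::nat) (L::nat).
       dconvex n fb \<and> dconvex m gb \<and>
       (\<forall>i\<le>n. fb i \<le> of_int (f i) \<and> of_int (f i) \<le> fb i + \<Delta>) \<and>
       (\<forall>j\<le>m. gb j \<le> of_int (g j) \<and> of_int (g j) \<le> gb j + \<Delta>) \<and>
       \<Delta> \<ge> 1 \<and>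
       {a..<a+L} \<subseteq> {0..n} \<and> {b..<b+L} \<subseteq> {0..m} \<and>
       (\<forall>i\<in>{a..<a+L}. \<forall>j\<in>{b..<b+L}. relevant n m fb gb (2 * \<Delta>) i j)
       \<longrightarrow> real (card (sumset {(int i, f i) | i. i \<in> {a..<a+L}}
                               {(int j, g j) | j. j \<in> {b..<b+L}}))
           \<le> C * real_of_rat \<Delta> * real (card {a..<a+L} + card {b..<b+L}))"
proof (intro exI[of _ 5] conjI allI impI)
  fix n m f g fb gb \<Delta> a b L
  assume "dconvex n fb \<and> dconvex m gb \<and>
       (\<forall>i\<le>n. fb i \<le> of_int (f i) \<and> of_int (f i) \<le> fb i + \<Delta>) \<and>
       (\<forall>j\<le>m. gb j \<le> of_int (g j) \<and> of_int (g j) \<le> gb j + \<Delta>) \<and>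
       \<Delta> \<ge> 1 \<and> {a..<a+L} \<subseteq> {0..n} \<and> {b..<b+L} \<subseteq> {0..m} \<and>
       (\<forall>i\<in>{a..<a+L}. \<forall>j\<in>{b..<b+L}. relevant n m fb gb (2 * \<Delta>) i j)"
  then show "real (card (sumset {(int i, f i) | i. i \<in> {a..<a+L}} {(int j, g j) | j. j \<in> {b..<b+L}}))
           \<le> 5 * real_of_rat \<Delta> * real (card {a..<a+L} + card {b..<b+L})"
    using card_sumset_graphs_le[of n fb f \<Delta> m gb g a L b] by blast
qed simp

end
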